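(* Let $F$ be a field of characteristic zero, $G$ a finite group, $A$ a $G$-graded PI-algebra (GPI-algebra) over $F$, and $d_1,\dots,d_m$ positive integers; put $d=d_1+\cdots+d_m$. Let $\mathcal{U}(d_1,\dots,d_m;A)$ be the subalgebra of $UT(d_1,\dots,d_m;\mathcal{U}_G(A))$ generated by the generic matrices $\xi_k^{(g)}$, $k\in\mathbb{N}$, $g\in G$, defined as follows: for $1\le r\le s\le m$ and indices $i,j$ with $d_1+\cdots+d_{r-1}+1\le i\le d_1+\cdots+d_r$ and $d_1+\cdots+d_{s-1}+1\le j\le d_1+\cdots+d_s$, the $(i,j)$ entry of $\xi_k^{(g)}$ is $x_{ij,k}^{(g)}+T_G(A)\in\mathcal{U}_G(A)$, where the $x_{ij,k}^{(g)}$ are pairwise distinct free generators of degree $g$; all entries below the diagonal blocks are $0$. Then the graded homomorphism $F\langle X\rangle\to\mathcal{U}(d_1,\dots,d_m;A)$ sending $x_k^{(g)}\mapsto\xi_k^{(g)}$ is surjective with kernel $T_G(UT(d_1,\dots,d_m;A))$; in particular \[\mathcal{U}(d_1,\dots,d_m;A)\cong \frac{F\langle X\rangle}{T_G(UT(d_1,\dots,d_m;A))}.\]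
   Context: All algebras are associative and unitary. $X=\bigcup_{g\in G}X^g$ is a disjoint union of countable sets, $X^g=\{x_1^{(g)},x_2^{(g)},\dots\}$ consisting of variables of degree $g$, and $F\langle X\rangle$ is the free associative algebra on $X$, $G$-graded by declaring a monomial $x_{i_1}\cdots x_{i_k}$ to have degree $\deg(x_{i_1})\cdots\deg(x_{i_k})$. For a $G$-graded algebra $A=\bigoplus_g A^g$, a graded polynomial $f(x_1,\dots,x_t)$ is a graded identity of $A$ if $f(a_1,\dots,a_t)=0$ whenever $a_i\in A^{\deg(x_i)}$; $T_G(A)$ is the ideal of all graded identities, and $\mathcal{U}_G(A)=F\langle X\rangle/T_G(A)$ is the relatively free $G$-graded algebra of $A$ (here taken over a sufficiently large set of graded variables, including the $x_{ij,k}^{(g)}$). A GPI-algebra is a $G$-graded algebra with a nonzero graded identity. $UT(d_1,\dots,d_m;A)$ denotes the algebra of block upper-triangular matrices in $M_{d}(A)$ whose $(r,s)$ block ($r\le s$) is an arbitrary $d_r\times d_s$ matrix over $A$ and whose blocks below the diagonal are zero; it is $G$-graded by letting its degree-$g$ component consist of the matrices all of whose entries lie in $A^g$. *)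

theory Defs
  imports Complex_Main "HOL-Library.Poly_Mapping" "HOL-Library.Function_Algebras" "HOL-Algebra.Group"
begin

(* ---------- Free associative algebra F<V> ----------
   A noncommutative polynomial over 'f in variables 'v is a finitely supported
   function from words (lists of variables) to coefficients. *)
type_synonym ('v, 'f) fpoly = "'v list \<Rightarrow>\<^sub>0 'f"

definition psmul :: "'f::semiring_0 \<Rightarrow> ('v, 'f) fpoly \<Rightarrow> ('v, 'f) fpoly" where
  "psmul c p = (\<Sum>w\<in>Poly_Mapping.keys p. Poly_Mapping.single w (c * Poly_Mapping.lookup p w))"

definition pmul :: "('v, 'f::semiring_0) fpoly \<Rightarrow> ('v, 'f) fpoly \<Rightarrow> ('v, 'f) fpoly" where
  "pmul p q = (\<Sum>u\<in>Poly_Mapping.keys p. \<Sum>w\<in>Poly_Mapping.keys q. Poly_Mapping.single (u @ w) (Poly_Mapping.lookup p u * Poly_Mapping.lookup q w))"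

definition pone :: "('v, 'f::{zero,one}) fpoly" where
  "pone = Poly_Mapping.single [] 1"

definition pvar :: "'v \<Rightarrow> ('v, 'f::{zero,one}) fpoly" where
  "pvar v = Poly_Mapping.single [v] 1"

(* ---------- Evaluation of a polynomial in an algebra, given its operations ----------
   sc = scalar multiplication, mul = multiplication, un = unit; addition / zero
   are those of the type. *)
definition prodl :: "('b \<Rightarrow> 'b \<Rightarrow> 'b) \<Rightarrow> 'b \<Rightarrow> 'b list \<Rightarrow> 'b" where
  "prodl mul un xs = foldr mul xs un"

definition geval :: "('f::zero \<Rightarrow> 'b::comm_monoid_add \<Rightarrow> 'b) \<Rightarrow> ('b \<Rightarrow> 'b \<Rightarrow> 'b) \<Rightarrow> 'b
     \<Rightarrow> ('v \<Rightarrow> 'b) \<Rightarrow> ('v, 'f) fpoly \<Rightarrow> 'b" where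
  "geval sc mul un \<phi> f = (\<Sum>w\<in>Poly_Mapping.keys f. sc (Poly_Mapping.lookup f w) (prodl mul un (map \<phi> w)))"

(* ---------- Graded identities ----------
   deg gives the G-degree of each variable; cmp g is the homogeneous component
   of degree g of the target algebra. *)
definition graded_identity ::
  "('g, 'z) monoid_scheme \<Rightarrow> ('v \<Rightarrow> 'g) \<Rightarrow> ('g \<Rightarrow> 'b set)
   \<Rightarrow> ('f::zero \<Rightarrow> 'b::comm_monoid_add \<Rightarrow> 'b) \<Rightarrow> ('b \<Rightarrow> 'b \<Rightarrow> 'b) \<Rightarrow> 'b
   \<Rightarrow> ('v, 'f) fpoly \<Rightarrow> bool" where
  "graded_identity G deg cmp sc mul un f \<longleftrightarrow>
     (\<forall>\<phi>. (\<forall>v. deg v \<in> carrier G \<longrightarrow> \<phi> v \<in> cmp (deg v)) \<longrightarrow> geval sc mul un \<phi> f = 0)"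

(* F<X>: polynomials in variables x_k^(g) = (g,k) with g \<in> G *)
definition FX :: "('g, 'z) monoid_scheme \<Rightarrow> (('g \<times> 'i), 'f::zero) fpoly set" where
  "FX G = {f. \<forall>w\<in>Poly_Mapping.keys f. \<forall>v\<in>set w. fst v \<in> carrier G}"

definition F_algebra :: "('f::field \<Rightarrow> 'a::ring_1 \<Rightarrow> 'a) \<Rightarrow> bool" where
  "F_algebra s \<longleftrightarrow> Vector_Spaces.vector_space s \<and>
     (\<forall>c x y. s c (x * y) = s c x * y \<and> s c (x * y) = x * s c y)"

definition graded_F_algebra ::
  "('g, 'z) monoid_scheme \<Rightarrow> ('f::field \<Rightarrow> 'a::ring_1 \<Rightarrow> 'a) \<Rightarrow> ('g \<Rightarrow> 'a set) \<Rightarrow> bool" where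
  "graded_F_algebra G s A \<longleftrightarrow> F_algebra s \<and>
     (\<forall>g\<in>carrier G. 0 \<in> A g \<and> (\<forall>x\<in>A g. \<forall>y\<in>A g. x + y \<in> A g) \<and> (\<forall>c. \<forall>x\<in>A g. s c x \<in> A g)) \<and>
     (\<forall>g\<in>carrier G. \<forall>h\<in>carrier G. \<forall>x\<in>A g. \<forall>y\<in>A h. x * y \<in> A (g \<otimes>\<^bsub>G\<^esub> h)) \<and>
     (\<forall>a. \<exists>!c. (\<forall>g. g \<notin> carrier G \<longrightarrow> c g = 0) \<and> (\<forall>g\<in>carrier G. c g \<in> A g) \<and>
              a = (\<Sum>g\<in>carrier G. c g))"

(* ---------- Matrices (0-based, size d, entries outside range are 0) ---------- *)
type_synonym 'b mat = "nat \<Rightarrow> nat \<Rightarrow> 'b"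

definition mat_mul :: "nat \<Rightarrow> ('b \<Rightarrow> 'b \<Rightarrow> 'b::comm_monoid_add) \<Rightarrow> 'b mat \<Rightarrow> 'b mat \<Rightarrow> 'b mat" where
  "mat_mul d mul M N = (\<lambda>i j. if i < d \<and> j < d then \<Sum>l<d. mul (M i l) (N l j) else 0)"

definition mat_one :: "nat \<Rightarrow> 'b \<Rightarrow> 'b::zero mat" where
  "mat_one d un = (\<lambda>i j. if i < d \<and> i = j then un else 0)"

definition mat_smul :: "('f \<Rightarrow> 'b \<Rightarrow> 'b) \<Rightarrow> 'f \<Rightarrow> 'b mat \<Rightarrow> 'b mat" where
  "mat_smul sc c M = (\<lambda>i j. sc c (M i j))"

(* block index (0-based) of row/column i for block sizes ds *)
definition blk :: "nat list \<Rightarrow> nat \<Rightarrow> nat" where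
  "blk ds i = (LEAST r. i < sum_list (take (Suc r) ds))"

(* degree-g component of UT(d_1,...,d_m; A) *)
definition UTcomp :: "nat list \<Rightarrow> ('g \<Rightarrow> 'a::zero set) \<Rightarrow> 'g \<Rightarrow> 'a mat set" where
  "UTcomp ds A g = {M. \<forall>i j. (M i j \<noteq> 0 \<longrightarrow> i < sum_list ds \<and> j < sum_list ds \<and> blk ds i \<le> blk ds j)
                          \<and> M i j \<in> A g}"

(* generic matrices xi_k^(g): entry (i,j) is the variable x_{ij,k}^(g) = (g,(i,j,k)) *)
definition generic :: "nat list \<Rightarrow> 'g \<times> nat \<Rightarrow> (('g \<times> (nat \<times> nat \<times> nat)), 'f::{zero,one}) fpoly mat" where
  "generic ds v = (\<lambda>i j. if i < sum_list ds \<and> j < sum_list ds \<and> blk ds i \<le> blk ds j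
                         then pvar (fst v, (i, j, snd v)) else 0)"

inductive_set gen_subalg :: "('f \<Rightarrow> 'b \<Rightarrow> 'b) \<Rightarrow> ('b \<Rightarrow> 'b \<Rightarrow> 'b) \<Rightarrow> 'b::comm_monoid_add \<Rightarrow> 'b set \<Rightarrow> 'b set"
  for sc mul un S where
  gen: "x \<in> S \<Longrightarrow> x \<in> gen_subalg sc mul un S"
| zero: "0 \<in> gen_subalg sc mul un S"
| unit: "un \<in> gen_subalg sc mul un S"
| smul: "x \<in> gen_subalg sc mul un S \<Longrightarrow> sc c x \<in> gen_subalg sc mul un S"
| add: "x \<in> gen_subalg sc mul un S \<Longrightarrow> y \<in> gen_subalg sc mul un S \<Longrightarrow> x + y \<in> gen_subalg sc mul un S"
| mul: "x \<in> gen_subalg sc mul un S \<Longrightarrow> y \<in> gen_subalg sc mul un S \<Longrightarrow> mul x y \<in> gen_subalg sc mul un S"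

end

theory Submission
  imports Defs
begin

text \<open>
  The image of \<open>F\<langle>X\<rangle>\<close> under
  \<open>x\<^sub>k\<^sup>(\<^sup>g\<^sup>) \<mapsto> \<xi>\<^sub>k\<^sup>(\<^sup>g\<^sup>)\<close> is a subalgebra containing the generic matrices, and every element of
  the generated subalgebra is a linear combination of products of generic matrices, hence an
  image. For the kernel, a graded substitution \<open>\<psi>\<close> of the variables \<open>x\<^sub>i\<^sub>j\<^sub>,\<^sub>k\<^sup>(\<^sup>g\<^sup>)\<close> into \<open>A\<close>
  turns \<open>\<xi>\<^sub>k\<^sup>(\<^sup>g\<^sup>)\<close> into an arbitrary homogeneous element of \<open>UT(d\<^sub>1,\<dots>,d\<^sub>m;A)\<close>, and
  entrywise evaluation commutes with evaluating \<open>f\<close>; so all entries of \<open>f(\<xi>)\<close> are graded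
  identities of \<open>A\<close> exactly when \<open>f\<close> vanishes on all graded substitutions into
  \<open>UT(d\<^sub>1,\<dots>,d\<^sub>m;A)\<close>. Neither argument uses that \<open>G\<close> is a finite group, that \<open>A\<close> satisfies a
  graded identity, or that the characteristic is zero.
\<close>

text \<open>
  With concatenation as addition, \<open>'v list \<Rightarrow>\<^sub>0 'f\<close> becomes the monoid algebra of the free
  monoid, and \<open>pmul\<close>, \<open>pone\<close>, \<open>psmul\<close> become its ring operations.
\<close>

instantiation list :: (type) monoid_add
begin
definition zero_list_def [simp]: "(0::'a list) = []"
definition plus_list_def [simp]: "(xs::'a list) + ys = xs @ ys"
instance by standard auto
end

lemma sum_single_lookup_keys:
  "(\<Sum>w\<in>Poly_Mapping.keys p. Poly_Mapping.single w (Poly_Mapping.lookup p w)) = p"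
  by (rule poly_mapping_eqI) (auto simp: lookup_sum lookup_single when_def in_keys_iff)

lemma pmul_eq_times: "pmul p q = (p * q :: ('v, 'f::semiring_0) fpoly)"
proof -
  have "p * q = (\<Sum>u\<in>Poly_Mapping.keys p. Poly_Mapping.single u (Poly_Mapping.lookup p u))
              * (\<Sum>w\<in>Poly_Mapping.keys q. Poly_Mapping.single w (Poly_Mapping.lookup q w))"
    by (simp add: sum_single_lookup_keys)
  also have "\<dots> = pmul p q"
    by (simp add: sum_product pmul_def mult_single)
  finally show ?thesis by simp
qed

lemma psmul_eq_single_Nil_times:
  "psmul c p = Poly_Mapping.single [] c * (p :: ('v, 'f::semiring_0) fpoly)"
proof -
  have "Poly_Mapping.single [] c * p
      = Poly_Mapping.single [] c * (\<Sum>w\<in>Poly_Mapping.keys p. Poly_Mapping.single w (Poly_Mapping.lookup p w))"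
    by (simp add: sum_single_lookup_keys)
  also have "\<dots> = psmul c p"
    by (simp add: psmul_def sum_distrib_left mult_single)
  finally show ?thesis by simp
qed

lemma single_Nil_commute:
  "Poly_Mapping.single [] (c::'f::comm_semiring_0) * (p :: ('v, 'f) fpoly) = p * Poly_Mapping.single [] c"
proof -
  have "p * Poly_Mapping.single [] c
      = (\<Sum>w\<in>Poly_Mapping.keys p. Poly_Mapping.single w (Poly_Mapping.lookup p w)) * Poly_Mapping.single [] c"
    by (simp add: sum_single_lookup_keys)
  also have "\<dots> = Poly_Mapping.single [] c
      * (\<Sum>w\<in>Poly_Mapping.keys p. Poly_Mapping.single w (Poly_Mapping.lookup p w))"
    by (simp add: sum_distrib_left sum_distrib_right mult_single mult.commute)
  finally show ?thesis by (simp add: sum_single_lookup_keys)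
qed

lemma pone_eq_one: "pone = (1 :: ('v, 'f::semiring_1) fpoly)"
  by (simp add: pone_def flip: single_one)

text \<open>
  Matrices of a fixed size \<open>d\<close> are modelled by all functions \<open>nat \<Rightarrow> nat \<Rightarrow> _\<close>, so the identity
  matrix is a unit only for matrices vanishing outside the \<open>d \<times> d\<close> range. The axioms therefore
  ask for the unit laws only on products, which is all that evaluation needs.
\<close>

locale eval_algebra =
  fixes sc :: "'f::field \<Rightarrow> 'b::comm_monoid_add \<Rightarrow> 'b" and mul :: "'b \<Rightarrow> 'b \<Rightarrow> 'b" and un :: 'b
  assumes sc_add_left: "sc (a + b) x = sc a x + sc b x"
    and sc_zero_left: "sc 0 x = 0"
    and sc_add_right: "sc a (x + y) = sc a x + sc a y"
    and sc_zero_right: "sc a 0 = 0"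
    and sc_one: "sc 1 x = x"
    and sc_sc: "sc a (sc b x) = sc (a * b) x"
    and mul_add_left: "mul (x + y) z = mul x z + mul y z"
    and mul_add_right: "mul x (y + z) = mul x y + mul x z"
    and mul_zero_left: "mul 0 x = 0"
    and mul_zero_right: "mul x 0 = 0"
    and mul_sc_left: "mul (sc a x) y = sc a (mul x y)"
    and mul_sc_right: "mul x (sc a y) = sc a (mul x y)"
    and mul_assoc: "mul (mul x y) z = mul x (mul y z)"
    and un_mul: "mul un (mul x y) = mul x y"
    and un_un: "mul un un = un"
begin

lemma prodl_append:
  "prodl mul un (map \<phi> (u @ w)) = mul (prodl mul un (map \<phi> u)) (prodl mul un (map \<phi> w))"
proof (induction u)
  case Nil
  show ?case by (cases w) (simp_all add: prodl_def un_un un_mul)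
next
  case (Cons a u)
  then show ?case by (simp add: prodl_def mul_assoc)
qed

lemma sc_sum: "sc c (sum h S) = (\<Sum>x\<in>S. sc c (h x))"
  by (induction S rule: infinite_finite_induct) (auto simp: sc_zero_right sc_add_right)

lemma mul_sum_left: "mul (sum h S) y = (\<Sum>x\<in>S. mul (h x) y)"
  by (induction S rule: infinite_finite_induct) (auto simp: mul_zero_left mul_add_left)

lemma mul_sum_right: "mul y (sum h S) = (\<Sum>x\<in>S. mul y (h x))"
  by (induction S rule: infinite_finite_induct) (auto simp: mul_zero_right mul_add_right)

lemma geval_eq_sum_superset:
  assumes "finite S" "Poly_Mapping.keys f \<subseteq> S"
  shows "geval sc mul un \<phi> f = (\<Sum>w\<in>S. sc (Poly_Mapping.lookup f w) (prodl mul un (map \<phi> w)))"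
  unfolding geval_def
  by (rule sum.mono_neutral_left) (use assms in \<open>auto simp: in_keys_iff sc_zero_left\<close>)

lemma geval_zero: "geval sc mul un \<phi> 0 = 0"
  by (simp add: geval_def)

lemma geval_add: "geval sc mul un \<phi> (f + g) = geval sc mul un \<phi> f + geval sc mul un \<phi> g"
proof -
  let ?S = "Poly_Mapping.keys f \<union> Poly_Mapping.keys g"
  let ?t = "\<lambda>h w. sc (Poly_Mapping.lookup h w) (prodl mul un (map \<phi> w))"
  have "geval sc mul un \<phi> (f + g) = (\<Sum>w\<in>?S. ?t (f + g) w)"
    by (rule geval_eq_sum_superset) (auto dest: keys_add[THEN subsetD])
  also have "\<dots> = (\<Sum>w\<in>?S. ?t f w) + (\<Sum>w\<in>?S. ?t g w)"
    by (simp add: lookup_add sc_add_left sum.distrib)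
  also have "\<dots> = geval sc mul un \<phi> f + geval sc mul un \<phi> g"
    using geval_eq_sum_superset[of ?S f \<phi>] geval_eq_sum_superset[of ?S g \<phi>] by simp
  finally show ?thesis .
qed

lemma geval_sum: "geval sc mul un \<phi> (sum h I) = (\<Sum>i\<in>I. geval sc mul un \<phi> (h i))"
  by (induction I rule: infinite_finite_induct) (auto simp: geval_zero geval_add)

lemma geval_single: "geval sc mul un \<phi> (Poly_Mapping.single w c) = sc c (prodl mul un (map \<phi> w))"
  by (simp add: geval_def sc_zero_left)

lemma geval_psmul: "geval sc mul un \<phi> (psmul c f) = sc c (geval sc mul un \<phi> f)"
  unfolding psmul_def geval_sum geval_single
  by (simp add: geval_def sc_sum sc_sc)

lemma geval_pmul: "geval sc mul un \<phi> (pmul f g) = mul (geval sc mul un \<phi> f) (geval sc mul un \<phi> g)"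
proof -
  have "geval sc mul un \<phi> (pmul f g) = (\<Sum>u\<in>Poly_Mapping.keys f. \<Sum>w\<in>Poly_Mapping.keys g.
      sc (Poly_Mapping.lookup f u * Poly_Mapping.lookup g w) (prodl mul un (map \<phi> (u @ w))))"
    unfolding pmul_def geval_sum geval_single ..
  also have "\<dots> = mul (geval sc mul un \<phi> f) (geval sc mul un \<phi> g)"
    unfolding geval_def mul_sum_left mul_sum_right mul_sc_left mul_sc_right sc_sc prodl_append
    by (simp add: sc_sum sc_sc mult.commute) (rule sum.swap)
  finally show ?thesis .
qed

lemma geval_pone: "geval sc mul un \<phi> pone = un"
  by (simp add: pone_def geval_single sc_one prodl_def)

lemma geval_pvar: "geval sc mul un \<phi> (pvar v) = mul (\<phi> v) un"
  by (simp add: pvar_def geval_single sc_one prodl_def)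

end

lemma geval_hom:
  assumes "\<And>x y. H (x + y) = H x + H y" "H 0 = 0" "\<And>c x. H (sc1 c x) = sc2 c (H x)"
    "\<And>x y. H (mul1 x y) = mul2 (H x) (H y)" "H un1 = un2"
  shows "H (geval sc1 mul1 un1 \<phi> f) = geval sc2 mul2 un2 (H \<circ> \<phi>) f"
proof -
  have H_sum: "H (sum h S) = (\<Sum>x\<in>S. H (h x))" for h and S :: "'x set"
    by (induction S rule: infinite_finite_induct) (auto simp: assms)
  have H_prodl: "H (prodl mul1 un1 (map \<phi> w)) = prodl mul2 un2 (map (H \<circ> \<phi>) w)" for w
    by (induction w) (auto simp: prodl_def assms)
  show ?thesis by (simp add: geval_def H_sum assms H_prodl)
qed

lemma geval_cong:
  assumes "\<And>w v. w \<in> Poly_Mapping.keys f \<Longrightarrow> v \<in> set w \<Longrightarrow> \<phi> v = \<phi>' v"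
  shows "geval sc mul un \<phi> f = geval sc mul un \<phi>' f"
  unfolding geval_def
  by (rule sum.cong[OF refl]) (metis assms map_eq_conv)

lemma F_algebra_eval_algebra:
  assumes "F_algebra (s :: 'f::field \<Rightarrow> 'a::ring_1 \<Rightarrow> 'a)"
  shows "eval_algebra s (*) 1"
proof -
  interpret vector_space s
    using assms by (simp add: F_algebra_def)
  have "s c x * y = s c (x * y)" "x * s c y = s c (x * y)" for c x y
    using assms unfolding F_algebra_def by metis+
  then show ?thesis
    by unfold_locales (simp_all add: algebra_simps)
qed

definition mat_supported :: "nat \<Rightarrow> 'b::zero mat \<Rightarrow> bool" where
  "mat_supported d M \<longleftrightarrow> (\<forall>i j. \<not> (i < d \<and> j < d) \<longrightarrow> M i j = 0)"

lemma mat_supported_mat_mul: "mat_supported d (mat_mul d mul M N)"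
  by (simp add: mat_supported_def mat_mul_def)

lemma mat_supported_mat_one: "mat_supported d (mat_one d un)"
  by (simp add: mat_supported_def mat_one_def)

lemma mat_supported_generic: "mat_supported (sum_list ds) (generic ds v)"
  by (simp add: mat_supported_def generic_def)

lemma mat_mul_one_left:
  assumes "mat_supported d (M :: 'r::semiring_1 mat)"
  shows "mat_mul d (*) (mat_one d 1) M = M"
proof (intro ext)
  fix i j
  show "mat_mul d (*) (mat_one d 1) M i j = M i j"
  proof (cases "i < d \<and> j < d")
    case True
    then have "(\<Sum>l<d. (if i < d \<and> i = l then 1 else 0) * M l j) = (\<Sum>l<d. if l = i then M l j else 0)"
      by (intro sum.cong) auto
    with True show ?thesis by (simp add: mat_mul_def mat_one_def)
  next
    case False
    then show ?thesis using assms by (auto simp: mat_mul_def mat_supported_def)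
  qed
qed

lemma mat_mul_one_right:
  assumes "mat_supported d (M :: 'r::semiring_1 mat)"
  shows "mat_mul d (*) M (mat_one d 1) = M"
proof (intro ext)
  fix i j
  show "mat_mul d (*) M (mat_one d 1) i j = M i j"
  proof (cases "i < d \<and> j < d")
    case True
    then have "(\<Sum>l<d. M i l * (if l < d \<and> l = j then 1 else 0)) = (\<Sum>l<d. if l = j then M i l else 0)"
      by (intro sum.cong) auto
    with True show ?thesis by (simp add: mat_mul_def mat_one_def)
  next
    case False
    then show ?thesis using assms by (auto simp: mat_mul_def mat_supported_def)
  qed
qed

lemma mat_mul_assoc:
  "mat_mul d (*) (mat_mul d (*) M N) P = mat_mul d (*) M (mat_mul d (*) N (P :: 'r::semiring_0 mat))"
proof (intro ext)
  fix i j
  have "(\<Sum>l<d. (\<Sum>m<d. M i m * N m l) * P l j) = (\<Sum>l<d. \<Sum>m<d. M i m * N m l * P l j)"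
    by (simp add: sum_distrib_right)
  also have "\<dots> = (\<Sum>m<d. \<Sum>l<d. M i m * N m l * P l j)"
    by (rule sum.swap)
  also have "\<dots> = (\<Sum>m<d. M i m * (\<Sum>l<d. N m l * P l j))"
    by (simp add: sum_distrib_left mult.assoc)
  finally have "(\<Sum>l<d. (\<Sum>m<d. M i m * N m l) * P l j) = (\<Sum>m<d. M i m * (\<Sum>l<d. N m l * P l j))" .
  then show "mat_mul d (*) (mat_mul d (*) M N) P i j = mat_mul d (*) M (mat_mul d (*) N P) i j"
    by (auto simp: mat_mul_def intro!: sum.cong)
qed

lemma eval_algebra_mat:
  fixes \<kappa> :: "'f::field \<Rightarrow> 'r::ring_1"
  assumes \<kappa>_add: "\<And>a b. \<kappa> (a + b) = \<kappa> a + \<kappa> b" and \<kappa>_zero: "\<kappa> 0 = 0" and \<kappa>_one: "\<kappa> 1 = 1"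
    and \<kappa>_mult: "\<And>a b. \<kappa> (a * b) = \<kappa> a * \<kappa> b" and \<kappa>_central: "\<And>a x. \<kappa> a * x = x * \<kappa> a"
  shows "eval_algebra (mat_smul (\<lambda>c x. \<kappa> c * x)) (mat_mul d (*)) (mat_one d (1::'r))"
proof
  fix a b :: 'f and x y z :: "'r mat"
  let ?sc = "mat_smul (\<lambda>c x. \<kappa> c * x)" and ?mul = "mat_mul d (*)"
  show "?sc (a + b) x = ?sc a x + ?sc b x"
    by (simp add: mat_smul_def \<kappa>_add distrib_right fun_eq_iff)
  show "?sc 0 x = 0"
    by (simp add: mat_smul_def \<kappa>_zero fun_eq_iff)
  show "?sc a (x + y) = ?sc a x + ?sc a y"
    by (simp add: mat_smul_def distrib_left fun_eq_iff)
  show "?sc a 0 = 0"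
    by (simp add: mat_smul_def fun_eq_iff)
  show "?sc 1 x = x"
    by (simp add: mat_smul_def \<kappa>_one fun_eq_iff)
  show "?sc a (?sc b x) = ?sc (a * b) x"
    by (simp add: mat_smul_def \<kappa>_mult mult.assoc fun_eq_iff)
  show "?mul (x + y) z = ?mul x z + ?mul y z"
    by (simp add: mat_mul_def distrib_right sum.distrib fun_eq_iff)
  show "?mul x (y + z) = ?mul x y + ?mul x z"
    by (simp add: mat_mul_def distrib_left sum.distrib fun_eq_iff)
  show "?mul 0 x = 0" "?mul x 0 = 0"
    by (simp_all add: mat_mul_def fun_eq_iff)
  show "?mul (?sc a x) y = ?sc a (?mul x y)"
    by (simp add: mat_mul_def mat_smul_def sum_distrib_left mult.assoc fun_eq_iff)
  have "x i l * (\<kappa> a * y l j) = \<kappa> a * (x i l * y l j)" for i l j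
    by (metis \<kappa>_central mult.assoc)
  then show "?mul x (?sc a y) = ?sc a (?mul x y)"
    by (simp add: mat_mul_def mat_smul_def sum_distrib_left fun_eq_iff)
  show "?mul (?mul x y) z = ?mul x (?mul y z)"
    by (rule mat_mul_assoc)
  show "?mul (mat_one d 1) (?mul x y) = ?mul x y"
    by (rule mat_mul_one_left[OF mat_supported_mat_mul])
  show "?mul (mat_one d 1) (mat_one d 1) = mat_one d (1::'r)"
    by (rule mat_mul_one_left[OF mat_supported_mat_one])
qed

lemma eval_algebra_poly_mat:
  "eval_algebra (mat_smul psmul) (mat_mul d pmul) (mat_one d pone :: ('v, 'f::field) fpoly mat)"
proof -
  have "psmul = (\<lambda>c p. Poly_Mapping.single [] c * (p :: ('v, 'f) fpoly))"
    by (simp add: fun_eq_iff psmul_eq_single_Nil_times)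
  moreover have "pmul = ((*) :: ('v, 'f) fpoly \<Rightarrow> _)"
    by (simp add: fun_eq_iff pmul_eq_times)
  moreover have "eval_algebra (mat_smul (\<lambda>c p. Poly_Mapping.single [] c * p)) (mat_mul d (*))
      (mat_one d (1 :: ('v, 'f) fpoly))"
    by (rule eval_algebra_mat) (simp_all add: single_add mult_single single_Nil_commute flip: single_one)
  ultimately show ?thesis
    by (simp only: pone_eq_one)
qed

lemma generic_mul_one:
  "mat_mul (sum_list ds) pmul (generic ds v) (mat_one (sum_list ds) pone)
    = (generic ds v :: (_, 'f::semiring_1) fpoly mat)"
  unfolding pone_eq_one pmul_eq_times[abs_def] by (rule mat_mul_one_right[OF mat_supported_generic])

lemma FX_zero: "0 \<in> FX G"
  by (simp add: FX_def)

lemma FX_pone: "pone \<in> FX G"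
  by (simp add: FX_def pone_def)

lemma FX_pvar: "fst v \<in> carrier G \<Longrightarrow> pvar v \<in> FX G"
  by (simp add: FX_def pvar_def)

lemma FX_add: "f \<in> FX G \<Longrightarrow> g \<in> FX G \<Longrightarrow> f + g \<in> FX G"
  unfolding FX_def by (auto dest!: keys_add[THEN subsetD])

lemma FX_pmul:
  assumes "f \<in> FX G" "g \<in> FX G"
  shows "pmul f g \<in> (FX G :: (_, 'f::semiring_0) fpoly set)"
  using assms keys_mult[of f g] unfolding FX_def pmul_eq_times by fastforce

lemma FX_psmul:
  assumes "f \<in> FX G"
  shows "psmul c f \<in> (FX G :: (_, 'f::semiring_0) fpoly set)"
  using assms keys_mult[of "Poly_Mapping.single [] c" f]
  unfolding FX_def psmul_eq_single_Nil_times by (fastforce split: if_splits)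

lemma gen_subalg_sum:
  "(\<And>k. k \<in> K \<Longrightarrow> h k \<in> gen_subalg sc mul un S) \<Longrightarrow> sum h K \<in> gen_subalg sc mul un S"
  by (induction K rule: infinite_finite_induct) (simp_all add: gen_subalg.zero gen_subalg.add)

lemma gen_subalg_prodl:
  "(\<And>v. v \<in> set w \<Longrightarrow> \<phi> v \<in> S) \<Longrightarrow> prodl mul un (map \<phi> w) \<in> gen_subalg sc mul un S"
  by (induction w) (simp_all add: prodl_def gen_subalg.unit gen_subalg.mul gen_subalg.gen)

lemma (in eval_algebra) geval_image_FX:
  fixes \<phi> :: "'g \<times> 'i \<Rightarrow> 'b"
  assumes \<phi>_mul_un: "\<And>v. mul (\<phi> v) un = \<phi> v"
  shows "geval sc mul un \<phi> ` FX G = gen_subalg sc mul un (\<phi> ` {v. fst v \<in> carrier G})"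
    (is "?ev ` _ = ?S")
proof
  show "?ev ` FX G \<subseteq> ?S"
  proof clarify
    fix f :: "('g \<times> 'i, 'f) fpoly" assume "f \<in> FX G"
    then have "prodl mul un (map \<phi> w) \<in> ?S" if "w \<in> Poly_Mapping.keys f" for w
      using that by (intro gen_subalg_prodl) (auto simp: FX_def)
    then show "?ev f \<in> ?S"
      unfolding geval_def by (intro gen_subalg_sum gen_subalg.smul)
  qed
next
  show "?S \<subseteq> ?ev ` FX G"
  proof
    fix x assume "x \<in> ?S"
    then show "x \<in> ?ev ` FX G"
    proof (induction rule: gen_subalg.induct)
      case (gen x)
      then obtain v where "fst v \<in> carrier G" "x = ?ev (pvar v)"
        by (auto simp: geval_pvar \<phi>_mul_un)
      then show ?case using FX_pvar by blast
    next
      case zero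
      show ?case using FX_zero geval_zero[symmetric] by (rule rev_image_eqI)
    next
      case unit
      show ?case using FX_pone geval_pone[symmetric] by (rule rev_image_eqI)
    next
      case (smul x c)
      then obtain f where "f \<in> FX G" "x = ?ev f" by blast
      then show ?case by (intro rev_image_eqI[of "psmul c f"]) (simp_all add: FX_psmul geval_psmul)
    next
      case (add x y)
      then obtain f g where "f \<in> FX G" "x = ?ev f" "g \<in> FX G" "y = ?ev g" by blast
      then show ?case by (intro rev_image_eqI[of "f + g"]) (simp_all add: FX_add geval_add)
    next
      case (mul x y)
      then obtain f g where "f \<in> FX G" "x = ?ev f" "g \<in> FX G" "y = ?ev g" by blast
      then show ?case by (intro rev_image_eqI[of "pmul f g"]) (simp_all add: FX_pmul geval_pmul)
    qed
  qed
qed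

lemma geval_generic_image_FX:
  "geval (mat_smul psmul) (mat_mul (sum_list ds) pmul) (mat_one (sum_list ds) pone) (generic ds)
      ` (FX G :: (_, 'f::field) fpoly set)
    = gen_subalg (mat_smul psmul) (mat_mul (sum_list ds) pmul) (mat_one (sum_list ds) pone)
        (generic ds ` {v. fst v \<in> carrier G})"
  by (rule eval_algebra.geval_image_FX[OF eval_algebra_poly_mat generic_mul_one])

definition generic_subst :: "nat list \<Rightarrow> ('g \<times> nat \<times> nat \<times> nat \<Rightarrow> 'a) \<Rightarrow> 'g \<times> nat \<Rightarrow> 'a::zero mat" where
  "generic_subst ds \<psi> v = (\<lambda>i j. if i < sum_list ds \<and> j < sum_list ds \<and> blk ds i \<le> blk ds j
                                 then \<psi> (fst v, i, j, snd v) else 0)"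

lemma geval_generic_entries:
  assumes "eval_algebra s (*) (1::'a::ring_1)"
  shows "(\<lambda>i j. geval s (*) 1 \<psi> (generic ds v i j)) = generic_subst ds \<psi> v"
  by (simp add: generic_def generic_subst_def fun_eq_iff
      eval_algebra.geval_pvar[OF assms] eval_algebra.geval_zero[OF assms])

lemma generic_subst_in_UTcomp:
  assumes "0 \<in> A (fst v)" "\<And>i j. \<psi> (fst v, i, j, snd v) \<in> A (fst v)"
  shows "generic_subst ds \<psi> v \<in> UTcomp ds A (fst v)"
  using assms by (simp add: generic_subst_def UTcomp_def)

lemma UTcomp_eq_generic_subst:
  assumes "\<phi> v \<in> UTcomp ds A (fst v)"
  shows "\<phi> v = generic_subst ds (\<lambda>(g, i, j, k). \<phi> (g, k) i j) v"
  using assms by (auto simp: generic_subst_def UTcomp_def fun_eq_iff)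

lemma (in eval_algebra) geval_mat_entries:
  "(\<lambda>i j. geval sc mul un \<psi> (geval (mat_smul psmul) (mat_mul d pmul) (mat_one d pone) \<Phi> f i j))
    = geval (mat_smul sc) (mat_mul d mul) (mat_one d un) (\<lambda>v i j. geval sc mul un \<psi> (\<Phi> v i j)) f"
  (is "?entries (geval _ _ _ \<Phi> f) = _")
proof -
  have "?entries (geval (mat_smul psmul) (mat_mul d pmul) (mat_one d pone) \<Phi> f)
      = geval (mat_smul sc) (mat_mul d mul) (mat_one d un) (?entries \<circ> \<Phi>) f"
  proof (rule geval_hom)
    show "?entries (x + y) = ?entries x + ?entries y" for x y
      by (simp add: fun_eq_iff geval_add)
    show "?entries 0 = 0"
      by (simp add: fun_eq_iff geval_zero)
    show "?entries (mat_smul psmul c x) = mat_smul sc c (?entries x)" for c x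
      by (simp add: fun_eq_iff mat_smul_def geval_psmul)
    show "?entries (mat_mul d pmul x y) = mat_mul d mul (?entries x) (?entries y)" for x y
      by (simp add: fun_eq_iff mat_mul_def geval_sum geval_pmul geval_zero)
    show "?entries (mat_one d pone) = mat_one d un"
      by (simp add: fun_eq_iff mat_one_def geval_pone geval_zero)
  qed
  then show ?thesis by (simp add: comp_def)
qed

lemma graded_identity_generic_iff:
  fixes s :: "'f::field \<Rightarrow> 'a::ring_1 \<Rightarrow> 'a" and f :: "('g \<times> nat, 'f) fpoly"
  assumes GA: "graded_F_algebra G s A" and f: "f \<in> FX G"
  shows "(\<forall>i j. graded_identity G fst A s (*) 1
            (geval (mat_smul psmul) (mat_mul (sum_list ds) pmul) (mat_one (sum_list ds) pone) (generic ds) f i j))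
    \<longleftrightarrow> graded_identity G fst (UTcomp ds A) (mat_smul s) (mat_mul (sum_list ds) (*)) (mat_one (sum_list ds) 1) f"
  (is "(\<forall>i j. graded_identity G fst A s (*) 1 (?gen i j)) \<longleftrightarrow> _")
proof -
  let ?UT = "geval (mat_smul s) (mat_mul (sum_list ds) (*)) (mat_one (sum_list ds) 1)"
  have E: "eval_algebra s (*) (1::'a)"
    using GA by (intro F_algebra_eval_algebra) (simp add: graded_F_algebra_def)
  have zero_in_A: "0 \<in> A g" if "g \<in> carrier G" for g
    using GA that by (simp add: graded_F_algebra_def)
  have entries: "(\<lambda>i j. geval s (*) 1 \<psi> (?gen i j)) = ?UT (generic_subst ds \<psi>) f" for \<psi>
    by (simp add: eval_algebra.geval_mat_entries[OF E] geval_generic_entries[OF E])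
  show ?thesis
  proof
    assume gen_id: "\<forall>i j. graded_identity G fst A s (*) 1 (?gen i j)"
    show "graded_identity G fst (UTcomp ds A) (mat_smul s) (mat_mul (sum_list ds) (*)) (mat_one (sum_list ds) 1) f"
      unfolding graded_identity_def
    proof (intro allI impI)
      fix \<phi> :: "'g \<times> nat \<Rightarrow> 'a mat"
      assume \<phi>: "\<forall>v. fst v \<in> carrier G \<longrightarrow> \<phi> v \<in> UTcomp ds A (fst v)"
      let ?\<psi> = "\<lambda>(g, i, j, k). \<phi> (g, k) i j"
      have "?UT \<phi> f = ?UT (generic_subst ds ?\<psi>) f"
        using f \<phi> by (intro geval_cong UTcomp_eq_generic_subst[where A = A]) (fastforce simp: FX_def)
      also have "\<dots> = 0"
        using gen_id \<phi> by (simp flip: entries add: fun_eq_iff graded_identity_def UTcomp_def split_beta)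
      finally show "?UT \<phi> f = 0" .
    qed
  next
    assume UT_id: "graded_identity G fst (UTcomp ds A) (mat_smul s) (mat_mul (sum_list ds) (*)) (mat_one (sum_list ds) 1) f"
    show "\<forall>i j. graded_identity G fst A s (*) 1 (?gen i j)"
      unfolding graded_identity_def
    proof (intro allI impI)
      fix \<psi> :: "'g \<times> nat \<times> nat \<times> nat \<Rightarrow> 'a" and i j
      assume \<psi>: "\<forall>v. fst v \<in> carrier G \<longrightarrow> \<psi> v \<in> A (fst v)"
      have "generic_subst ds \<psi> v \<in> UTcomp ds A (fst v)" if "fst v \<in> carrier G" for v
        using \<psi> that by (intro generic_subst_in_UTcomp zero_in_A) auto
      then have "?UT (generic_subst ds \<psi>) f = 0"
        using UT_id unfolding graded_identity_def by blast
      then show "geval s (*) 1 \<psi> (?gen i j) = 0"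
        by (simp flip: entries add: fun_eq_iff)
    qed
  qed
qed

theorem lemma5p1:
  fixes G :: "('g, 'z) monoid_scheme"
    and s :: "'f::field_char_0 \<Rightarrow> 'a::ring_1 \<Rightarrow> 'a"
    and A :: "'g \<Rightarrow> 'a set"
    and ds :: "nat list"
  assumes "group G" and "finite (carrier G)"
    and "graded_F_algebra G s A"
    and "\<exists>f\<in>FX G. f \<noteq> (0 :: ('g \<times> nat, 'f) fpoly) \<and> graded_identity G fst A s (*) 1 f"
    and "\<forall>k\<in>set ds. 0 < k"
  shows
    "((\<lambda>f. geval (mat_smul psmul) (mat_mul (sum_list ds) pmul) (mat_one (sum_list ds) pone) (generic ds) f)
        ` (FX G :: ('g \<times> nat, 'f) fpoly set)
     = gen_subalg (mat_smul psmul) (mat_mul (sum_list ds) pmul) (mat_one (sum_list ds) pone)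
         (generic ds ` {v. fst v \<in> carrier G}))
     \<and> (\<forall>f\<in>(FX G :: ('g \<times> nat, 'f) fpoly set).
       (\<forall>i j. graded_identity G fst A s (*) 1
          (geval (mat_smul psmul) (mat_mul (sum_list ds) pmul) (mat_one (sum_list ds) pone) (generic ds) f i j))
       \<longleftrightarrow> graded_identity G fst (UTcomp ds A) (mat_smul s) (mat_mul (sum_list ds) (*)) (mat_one (sum_list ds) 1) f)"
  using geval_generic_image_FX graded_identity_generic_iff[OF assms(3)] by blast

end
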